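(* Let $\varphi:\Omega\to\mathbb R$ be a summable potential. Then (1) $\hat\sigma$ is of bounded access if and only if condition (A) holds; (2) $\hat\sigma$ is of finite range if and only if condition (B) holds.
   Context: $(X,\mathcal F,m)$ is a complete probability space, $\theta:X\to X$ an invertible measurable $m$-preserving map, $E=\mathbb N$, and $x\mapsto A(x)=(A_{ij}(x))_{i,j\in E}$ a measurable map into $\{0,1\}$-matrices. $E_x^\infty$ is the set of $\omega\in E^{\mathbb N}$ with $A_{\omega_i\omega_{i+1}}(\theta^i(x))=1$ for all $i\ge0$; $[e]_x=\{\omega\in E_x^\infty:\omega_0=e\}$, $[0,\dots,l]_x=\{\omega\in E_x^\infty:\omega_0\le l\}$, complements taken in $E_x^\infty$. $d(\omega,\tau)=e^{-\min\{n:\omega_n\ne\tau_n\}}$. $\sigma_x$ is the shift $E_x^\infty\to E_{\theta(x)}^\infty$, $\Omega=\bigcup_x\{x\}\times E_x^\infty$, $\hat\sigma(x,\omega)=(\theta(x),\sigma_x\omega)$, assumed topologically mixing (for all $a,b\in E$ there is $N$ such that for $n\ge N$ and all $x$ there is a word $\omega$ of length $n+1$ with $a\omega b$ admissible at $x$). Finite range: for every $e\in E$ there is a finite $D_e\subset E$ with $\{j:A_{ej}(x)=1\}\subset D_e$ for $m$-a.e. $x$. Bounded access: for every $b\in E$ there is $b^*\in E$ such that for $m$-a.e. $x$ there is $a\le b^*$ with $A_{ab}(x)=1$. Fix $\alpha>0$, $v_\alpha(g)=\sup\{|g(\tau)-g(\omega)|/d(\tau,\omega)^\alpha:\tau\ne\omega,\tau_0=\omega_0\}$.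 A summable potential is a measurable $\varphi:\Omega\to\mathbb R$ with $\varphi_x=\varphi(x,\cdot)$ continuous, $\operatorname{ess\,sup}_xv_\alpha(\varphi_x)<\infty$, such that for every $e\in E$ there are $0<c_e<C_e<\infty$ with $c_e\le e^{\varphi_x}\le C_e$ on $[e]_x$ for a.e. $x$, and $\lim_{l\to\infty}\operatorname{ess\,sup}_x\sup\mathcal L_x(1_{[0,\dots,l]_x^c})=0$, where $\mathcal L_xg(\omega)=\sum_{e\in E:\,A_{e\omega_0}(x)=1}g(e\omega)e^{\varphi_x(e\omega)}$ for $\omega\in E_{\theta(x)}^\infty$. Condition (A): for every $e\in E$ there is $M_e\in(0,\infty)$ with $M_e^{-1}\le\mathcal L_x1$ on $[e]_{\theta(x)}$ for a.e. $x$. Condition (B): $\lim_{e\to\infty}\operatorname{ess\,sup}_x\sup_{[e]_{\theta(x)}}\mathcal L_x1=0$. *)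

theory Defs
  imports "HOL-Probability.Probability"
begin

text \<open>The alphabet E is nat;
  A x i j is the (0/1)-entry A_{ij}(x), encoded as a boolean.\<close>

definition iter :: "('a \<Rightarrow> 'a) \<Rightarrow> nat \<Rightarrow> 'a \<Rightarrow> 'a" where
  "iter \<theta> n = \<theta> ^^ n"

definition Eadm :: "('a \<Rightarrow> 'a) \<Rightarrow> ('a \<Rightarrow> nat \<Rightarrow> nat \<Rightarrow> bool) \<Rightarrow> 'a \<Rightarrow> (nat \<Rightarrow> nat) set" where
  "Eadm \<theta> A x = {\<omega>. \<forall>i. A (iter \<theta> i x) (\<omega> i) (\<omega> (Suc i))}"

definition cyl :: "('a \<Rightarrow> 'a) \<Rightarrow> ('a \<Rightarrow> nat \<Rightarrow> nat \<Rightarrow> bool) \<Rightarrow> 'a \<Rightarrow> nat \<Rightarrow> (nat \<Rightarrow> nat) set" where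
  "cyl \<theta> A x e = {\<omega> \<in> Eadm \<theta> A x. \<omega> 0 = e}"

definition cyl_le :: "('a \<Rightarrow> 'a) \<Rightarrow> ('a \<Rightarrow> nat \<Rightarrow> nat \<Rightarrow> bool) \<Rightarrow> 'a \<Rightarrow> nat \<Rightarrow> (nat \<Rightarrow> nat) set" where
  "cyl_le \<theta> A x l = {\<omega> \<in> Eadm \<theta> A x. \<omega> 0 \<le> l}"

definition dseq :: "(nat \<Rightarrow> nat) \<Rightarrow> (nat \<Rightarrow> nat) \<Rightarrow> real" where
  "dseq \<omega> \<tau> = (if \<omega> = \<tau> then 0 else exp (- real (LEAST n. \<omega> n \<noteq> \<tau> n)))"

definition Omega :: "'a measure \<Rightarrow> ('a \<Rightarrow> 'a) \<Rightarrow> ('a \<Rightarrow> nat \<Rightarrow> nat \<Rightarrow> bool) \<Rightarrow> ('a \<times> (nat \<Rightarrow> nat)) set" where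
  "Omega M \<theta> A = (SIGMA x:space M. Eadm \<theta> A x)"

definition prep :: "nat \<Rightarrow> (nat \<Rightarrow> nat) \<Rightarrow> (nat \<Rightarrow> nat)" where
  "prep e \<omega> = case_nat e \<omega>"

text \<open>Transfer operator L_x g (omega) for omega in E_{theta x}, for nonnegative g
  (the series of nonnegative terms is taken in [0,infinity]).\<close>
definition Lop :: "('a \<Rightarrow> nat \<Rightarrow> nat \<Rightarrow> bool) \<Rightarrow> ('a \<Rightarrow> (nat \<Rightarrow> nat) \<Rightarrow> real) \<Rightarrow> 'a
    \<Rightarrow> ((nat \<Rightarrow> nat) \<Rightarrow> real) \<Rightarrow> (nat \<Rightarrow> nat) \<Rightarrow> ennreal" where
  "Lop A \<phi> x g \<omega> = (\<Sum>e. if A x e (\<omega> 0) then ennreal (g (prep e \<omega>) * exp (\<phi> x (prep e \<omega>))) else 0)"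

definition random_shift :: "'a measure \<Rightarrow> ('a \<Rightarrow> 'a) \<Rightarrow> ('a \<Rightarrow> nat \<Rightarrow> nat \<Rightarrow> bool) \<Rightarrow> bool" where
  "random_shift M \<theta> A \<longleftrightarrow>
     prob_space M \<and> complete_measure M \<and>
     \<theta> \<in> M \<rightarrow>\<^sub>M M \<and> bij_betw \<theta> (space M) (space M) \<and>
     the_inv_into (space M) \<theta> \<in> M \<rightarrow>\<^sub>M M \<and>
     distr M M \<theta> = M \<and>
     (\<forall>i j. (\<lambda>x. A x i j) \<in> M \<rightarrow>\<^sub>M count_space UNIV)"

definition top_mixing :: "'a measure \<Rightarrow> ('a \<Rightarrow> 'a) \<Rightarrow> ('a \<Rightarrow> nat \<Rightarrow> nat \<Rightarrow> bool) \<Rightarrow> bool" where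
  "top_mixing M \<theta> A \<longleftrightarrow>
     (\<forall>a b. \<exists>N. \<forall>n\<ge>N. \<forall>x\<in>space M. \<exists>\<tau>::nat \<Rightarrow> nat.
        \<tau> 0 = a \<and> \<tau> (n + 2) = b \<and> (\<forall>i < n + 2. A (iter \<theta> i x) (\<tau> i) (\<tau> (Suc i))))"

definition finite_range :: "'a measure \<Rightarrow> ('a \<Rightarrow> nat \<Rightarrow> nat \<Rightarrow> bool) \<Rightarrow> bool" where
  "finite_range M A \<longleftrightarrow> (\<forall>e. \<exists>D. finite D \<and> (AE x in M. {j. A x e j} \<subseteq> D))"

definition bounded_access :: "'a measure \<Rightarrow> ('a \<Rightarrow> nat \<Rightarrow> nat \<Rightarrow> bool) \<Rightarrow> bool" where
  "bounded_access M A \<longleftrightarrow> (\<forall>b. \<exists>b'. AE x in M. \<exists>a\<le>b'. A x a b)"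

text \<open>Summable potentials (essential suprema written out via AE).\<close>
definition summable_potential :: "'a measure \<Rightarrow> ('a \<Rightarrow> 'a) \<Rightarrow> ('a \<Rightarrow> nat \<Rightarrow> nat \<Rightarrow> bool)
    \<Rightarrow> real \<Rightarrow> ('a \<Rightarrow> (nat \<Rightarrow> nat) \<Rightarrow> real) \<Rightarrow> bool" where
  "summable_potential M \<theta> A \<alpha> \<phi> \<longleftrightarrow>
     case_prod \<phi> \<in> borel_measurable
        (restrict_space (M \<Otimes>\<^sub>M (\<Pi>\<^sub>M i\<in>UNIV. count_space (UNIV :: nat set))) (Omega M \<theta> A)) \<and>
     (\<forall>x\<in>space M. \<forall>\<omega>\<in>Eadm \<theta> A x. \<forall>\<epsilon>>0. \<exists>\<delta>>0. \<forall>\<tau>\<in>Eadm \<theta> A x.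
         dseq \<omega> \<tau> < \<delta> \<longrightarrow> \<bar>\<phi> x \<tau> - \<phi> x \<omega>\<bar> < \<epsilon>) \<and>
     (\<exists>C::real. AE x in M. \<forall>\<tau>\<in>Eadm \<theta> A x. \<forall>\<omega>\<in>Eadm \<theta> A x.
         \<tau> \<noteq> \<omega> \<and> \<tau> 0 = \<omega> 0 \<longrightarrow> \<bar>\<phi> x \<tau> - \<phi> x \<omega>\<bar> \<le> C * dseq \<tau> \<omega> powr \<alpha>) \<and>
     (\<forall>e. \<exists>c C::real. 0 < c \<and> c < C \<and>
         (AE x in M. \<forall>\<omega>\<in>cyl \<theta> A x e. c \<le> exp (\<phi> x \<omega>) \<and> exp (\<phi> x \<omega>) \<le> C)) \<and>
     (\<forall>\<epsilon>>0. \<exists>L. \<forall>l\<ge>L. AE x in M. \<forall>\<omega>\<in>Eadm \<theta> A (\<theta> x).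
         Lop A \<phi> x (indicator (Eadm \<theta> A x - cyl_le \<theta> A x l)) \<omega> \<le> ennreal \<epsilon>)"

definition condA :: "'a measure \<Rightarrow> ('a \<Rightarrow> 'a) \<Rightarrow> ('a \<Rightarrow> nat \<Rightarrow> nat \<Rightarrow> bool)
    \<Rightarrow> ('a \<Rightarrow> (nat \<Rightarrow> nat) \<Rightarrow> real) \<Rightarrow> bool" where
  "condA M \<theta> A \<phi> \<longleftrightarrow> (\<forall>e. \<exists>Me::real. 0 < Me \<and>
     (AE x in M. \<forall>\<omega>\<in>cyl \<theta> A (\<theta> x) e. ennreal (1 / Me) \<le> Lop A \<phi> x (\<lambda>_. 1) \<omega>))"

definition condB :: "'a measure \<Rightarrow> ('a \<Rightarrow> 'a) \<Rightarrow> ('a \<Rightarrow> nat \<Rightarrow> nat \<Rightarrow> bool)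
    \<Rightarrow> ('a \<Rightarrow> (nat \<Rightarrow> nat) \<Rightarrow> real) \<Rightarrow> bool" where
  "condB M \<theta> A \<phi> \<longleftrightarrow> (\<forall>\<epsilon>>0. \<exists>N. \<forall>e\<ge>N.
     AE x in M. \<forall>\<omega>\<in>cyl \<theta> A (\<theta> x) e. Lop A \<phi> x (\<lambda>_. 1) \<omega> \<le> ennreal \<epsilon>)"

end

theory Submission
  imports Defs
begin

text \<open>A summable potential gives, for each symbol e, a uniform positive lower bound c_e for
  the weight of e and uniformly small tails of the transfer operator. For bounded access
  the predecessor a \<le> b* of b contributes at least min_{a\<le>b*} c_a to L_x 1 on [b]; conversely,
  if b had no predecessor \<le> l on a set of positive measure, L_x 1 would there be bounded by
  the tail beyond l. Finite range is handled the same way with the roles of b and e swapped: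
  a symbol b far beyond all D_e with e \<le> l only has predecessors beyond l, and a symbol b
  following e contributes c_e to L_x 1 on [b]. Topological mixing is needed only to make
  every cylinder [b]_x nonempty.\<close>

lemma iter_add: "iter \<theta> (m + n) x = iter \<theta> m (iter \<theta> n x)"
  by (simp add: iter_def funpow_add)

lemma iter_Suc_right: "iter \<theta> (Suc i) x = iter \<theta> i (\<theta> x)"
  by (simp add: iter_def funpow_Suc_right del: funpow.simps)

lemma iter_in_space:
  assumes "\<theta> \<in> M \<rightarrow>\<^sub>M M" "y \<in> space M" shows "iter \<theta> n y \<in> space M"
  using assms by (induction n) (auto simp: iter_def measurable_space)

lemma prep_in_cyl:
  assumes "\<omega> \<in> Eadm \<theta> A (\<theta> x)" "A x e (\<omega> 0)"
  shows "prep e \<omega> \<in> cyl \<theta> A x e"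
  unfolding cyl_def Eadm_def
proof (intro CollectI conjI allI)
  fix i show "A (iter \<theta> i x) (prep e \<omega> i) (prep e \<omega> (Suc i))"
  proof (cases i)
    case 0 then show ?thesis using assms(2) by (simp add: iter_def prep_def)
  next
    case (Suc j)
    have "A (iter \<theta> j (\<theta> x)) (\<omega> j) (\<omega> (Suc j))" using assms(1) by (simp add: Eadm_def)
    then show ?thesis using Suc by (simp add: prep_def iter_Suc_right)
  qed
qed (simp add: prep_def)

text \<open>Mixing yields, from every base point, an admissible loop b \<dots> b of a fixed length K;
  the point of [b]_y is obtained by concatenating such loops along the orbit y, \<theta>^K y, \<dots>\<close>

lemma cyl_nonempty:
  assumes \<theta>: "\<theta> \<in> M \<rightarrow>\<^sub>M M" and mixing: "top_mixing M \<theta> A" and y: "y \<in> space M"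
  shows "cyl \<theta> A y b \<noteq> {}"
proof -
  obtain N where N: "\<forall>n\<ge>N. \<forall>x\<in>space M. \<exists>\<tau>::nat \<Rightarrow> nat.
        \<tau> 0 = b \<and> \<tau> (n + 2) = b \<and> (\<forall>i < n + 2. A (iter \<theta> i x) (\<tau> i) (\<tau> (Suc i)))"
    using mixing unfolding top_mixing_def by blast
  define K where "K = N + 2"
  have "\<forall>x\<in>space M. \<exists>\<tau>::nat \<Rightarrow> nat.
      \<tau> 0 = b \<and> \<tau> K = b \<and> (\<forall>i < K. A (iter \<theta> i x) (\<tau> i) (\<tau> (Suc i)))"
    using N K_def by blast
  then obtain W where W: "\<And>x. x \<in> space M \<Longrightarrow> W x 0 = b \<and> W x K = b \<and>
      (\<forall>i < K. A (iter \<theta> i x) (W x i) (W x (Suc i)))"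
    by metis
  define st where "st q = iter \<theta> (K * q) y" for q
  have st_space: "st q \<in> space M" for q using iter_in_space[OF \<theta> y] st_def by simp
  define \<omega> where "\<omega> i = W (st (i div K)) (i mod K)" for i
  have "\<omega> \<in> cyl \<theta> A y b"
    unfolding cyl_def Eadm_def
  proof (intro CollectI conjI allI)
    show "\<omega> 0 = b" using W[OF st_space[of 0]] by (simp add: \<omega>_def)
  next
    fix i
    define q r where "q = i div K" and "r = i mod K"
    have r_less: "r < K" using r_def K_def by simp
    have "i = r + K * q" using q_def r_def by simp
    then have "iter \<theta> i y = iter \<theta> r (st q)" using st_def iter_add by metis
    moreover have "A (iter \<theta> r (st q)) (W (st q) r) (W (st q) (Suc r))"
      using W[OF st_space[of q]] r_less by blast
    moreover have "\<omega> (Suc i) = W (st q) (Suc r)"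
    proof (cases "Suc r = K")
      case True
      then have "\<omega> (Suc i) = W (st (Suc q)) 0"
        unfolding \<omega>_def by (simp add: div_Suc mod_Suc q_def r_def)
      also have "\<dots> = W (st q) (Suc r)" using W[OF st_space] True by simp
      finally show ?thesis .
    next
      case False
      then show ?thesis unfolding \<omega>_def by (simp add: div_Suc mod_Suc q_def r_def)
    qed
    ultimately show "A (iter \<theta> i y) (\<omega> i) (\<omega> (Suc i))" by (simp add: \<omega>_def q_def r_def)
  qed
  then show ?thesis by blast
qed

lemma Lop_ge_term:
  assumes "A x e (\<omega> 0)"
  shows "ennreal (g (prep e \<omega>) * exp (\<phi> x (prep e \<omega>))) \<le> Lop A \<phi> x g \<omega>"
proof -
  let ?f = "\<lambda>e. if A x e (\<omega> 0) then ennreal (g (prep e \<omega>) * exp (\<phi> x (prep e \<omega>))) else 0"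
  have "sum ?f {e} \<le> suminf ?f"
    by (rule sum_le_suminf) (auto intro: summableI)
  then show ?thesis using assms by (simp add: Lop_def)
qed

lemma Lop_one_le_tail:
  assumes "\<omega> \<in> Eadm \<theta> A (\<theta> x)" "\<And>e. A x e (\<omega> 0) \<Longrightarrow> l < e"
  shows "Lop A \<phi> x (\<lambda>_. 1) \<omega> \<le> Lop A \<phi> x (indicator (Eadm \<theta> A x - cyl_le \<theta> A x l)) \<omega>"
  unfolding Lop_def
proof (rule suminf_le)
  fix e
  show "(if A x e (\<omega> 0) then ennreal (1 * exp (\<phi> x (prep e \<omega>))) else 0)
    \<le> (if A x e (\<omega> 0) then ennreal (indicator (Eadm \<theta> A x - cyl_le \<theta> A x l) (prep e \<omega>)
        * exp (\<phi> x (prep e \<omega>))) else 0)"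
  proof (cases "A x e (\<omega> 0)")
    case True
    then have "prep e \<omega> \<in> cyl \<theta> A x e" "l < e" using prep_in_cyl[OF assms(1)] assms(2) by auto
    then have "prep e \<omega> \<in> Eadm \<theta> A x - cyl_le \<theta> A x l"
      by (auto simp: cyl_def cyl_le_def)
    then show ?thesis using True by simp
  qed simp
qed (auto intro: summableI)

lemma summable_potential_tail:
  assumes "summable_potential M \<theta> A \<alpha> \<phi>" "0 < \<epsilon>"
  obtains l where "AE x in M. \<forall>\<omega>\<in>Eadm \<theta> A (\<theta> x).
    Lop A \<phi> x (indicator (Eadm \<theta> A x - cyl_le \<theta> A x l)) \<omega> \<le> ennreal \<epsilon>"
  using assms unfolding summable_potential_def by blast

lemma summable_potential_lower_bound:
  assumes "summable_potential M \<theta> A \<alpha> \<phi>"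
  obtains c :: "nat \<Rightarrow> real" where "\<And>e. 0 < c e"
    and "AE x in M. \<forall>e. \<forall>\<omega>\<in>cyl \<theta> A x e. c e \<le> exp (\<phi> x \<omega>)"
proof -
  have "\<forall>e. \<exists>c. 0 < c \<and> (AE x in M. \<forall>\<omega>\<in>cyl \<theta> A x e. c \<le> exp (\<phi> x \<omega>))"
  proof
    fix e
    have "\<exists>c C::real. 0 < c \<and> c < C \<and>
        (AE x in M. \<forall>\<omega>\<in>cyl \<theta> A x e. c \<le> exp (\<phi> x \<omega>) \<and> exp (\<phi> x \<omega>) \<le> C)"
      using assms unfolding summable_potential_def by (elim conjE) (rule spec)
    then obtain c C :: real where "0 < c"
      and "AE x in M. \<forall>\<omega>\<in>cyl \<theta> A x e. c \<le> exp (\<phi> x \<omega>) \<and> exp (\<phi> x \<omega>) \<le> C"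
      by blast
    moreover from this(2) have "AE x in M. \<forall>\<omega>\<in>cyl \<theta> A x e. c \<le> exp (\<phi> x \<omega>)"
      by (rule eventually_mono) blast
    ultimately show "\<exists>c. 0 < c \<and> (AE x in M. \<forall>\<omega>\<in>cyl \<theta> A x e. c \<le> exp (\<phi> x \<omega>))"
      by blast
  qed
  from choice[OF this] obtain c
    where "\<forall>e. 0 < c e \<and> (AE x in M. \<forall>\<omega>\<in>cyl \<theta> A x e. c e \<le> exp (\<phi> x \<omega>))"
    by (elim exE)
  then show thesis using that[of c] by (simp add: AE_all_countable)
qed

lemma Lop_one_ge_lower_bound:
  assumes "\<forall>e. \<forall>\<omega>\<in>cyl \<theta> A x e. c e \<le> exp (\<phi> x \<omega>)"
    and "\<omega> \<in> Eadm \<theta> A (\<theta> x)" "A x e (\<omega> 0)"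
  shows "ennreal (c e) \<le> Lop A \<phi> x (\<lambda>_. 1) \<omega>"
proof -
  have "prep e \<omega> \<in> cyl \<theta> A x e" using prep_in_cyl assms(2,3) .
  then have "c e \<le> exp (\<phi> x (prep e \<omega>))" using assms(1) by blast
  then have "ennreal (c e) \<le> ennreal (1 * exp (\<phi> x (prep e \<omega>)))" by simp
  also have "\<dots> \<le> Lop A \<phi> x (\<lambda>_. 1) \<omega>" using Lop_ge_term[of A x e \<omega> "\<lambda>_. 1" \<phi>] assms(3) by simp
  finally show ?thesis .
qed

lemma bounded_access_imp_condA:
  assumes \<phi>: "summable_potential M \<theta> A \<alpha> \<phi>" and access: "bounded_access M A"
  shows "condA M \<theta> A \<phi>"
  unfolding condA_def
proof
  fix b
  obtain c where c_pos: "\<And>e. 0 < c e"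
    and c: "AE x in M. \<forall>e. \<forall>\<omega>\<in>cyl \<theta> A x e. c e \<le> exp (\<phi> x \<omega>)"
    using summable_potential_lower_bound[OF \<phi>] by blast
  obtain b' where b': "AE x in M. \<exists>a\<le>b'. A x a b" using access bounded_access_def by blast
  define m where "m = Min (c ` {..b'})"
  have m_pos: "0 < m" unfolding m_def using c_pos by (subst Min_gr_iff) auto
  have m_le: "a \<le> b' \<Longrightarrow> m \<le> c a" for a unfolding m_def by (rule Min_le) auto
  have "AE x in M. \<forall>\<omega>\<in>cyl \<theta> A (\<theta> x) b. ennreal m \<le> Lop A \<phi> x (\<lambda>_. 1) \<omega>"
    using b' c
  proof eventually_elim
    case (elim x)
    show ?case
    proof
      fix \<omega> assume \<omega>: "\<omega> \<in> cyl \<theta> A (\<theta> x) b"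
      obtain a where a: "a \<le> b'" "A x a b" using elim(1) by blast
      have "ennreal m \<le> ennreal (c a)" using m_le[OF a(1)] by (rule ennreal_leI)
      also have "\<dots> \<le> Lop A \<phi> x (\<lambda>_. 1) \<omega>"
        using Lop_one_ge_lower_bound[of \<theta> A x c \<phi>, OF elim(2)] \<omega> a(2) by (auto simp: cyl_def)
      finally show "ennreal m \<le> Lop A \<phi> x (\<lambda>_. 1) \<omega>" .
    qed
  qed
  then show "\<exists>Me::real. 0 < Me \<and>
      (AE x in M. \<forall>\<omega>\<in>cyl \<theta> A (\<theta> x) b. ennreal (1 / Me) \<le> Lop A \<phi> x (\<lambda>_. 1) \<omega>)"
    using m_pos by (intro exI[of _ "1 / m"]) simp
qed

lemma condA_imp_bounded_access:
  assumes \<phi>: "summable_potential M \<theta> A \<alpha> \<phi>" and condA: "condA M \<theta> A \<phi>"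
    and nonempty: "\<And>x b. x \<in> space M \<Longrightarrow> cyl \<theta> A (\<theta> x) b \<noteq> {}"
  shows "bounded_access M A"
  unfolding bounded_access_def
proof
  fix b
  obtain Me where Me: "0 < Me"
    and lower: "AE x in M. \<forall>\<omega>\<in>cyl \<theta> A (\<theta> x) b. ennreal (1 / Me) \<le> Lop A \<phi> x (\<lambda>_. 1) \<omega>"
    using condA condA_def by blast
  obtain l where tail: "AE x in M. \<forall>\<omega>\<in>Eadm \<theta> A (\<theta> x).
      Lop A \<phi> x (indicator (Eadm \<theta> A x - cyl_le \<theta> A x l)) \<omega> \<le> ennreal (1 / (2 * Me))"
    using summable_potential_tail[OF \<phi>, of "1 / (2 * Me)"] Me by auto
  have half_less: "ennreal (1 / (2 * Me)) < ennreal (1 / Me)"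
    using Me by (subst ennreal_less_iff) (auto simp: field_simps)
  have "AE x in M. \<exists>a\<le>l. A x a b"
    using lower tail AE_space
  proof eventually_elim
    case (elim x)
    obtain \<omega> where \<omega>: "\<omega> \<in> cyl \<theta> A (\<theta> x) b" using nonempty[OF elim(3)] by blast
    show ?case
    proof (rule ccontr)
      assume "\<not> (\<exists>a\<le>l. A x a b)"
      then have "Lop A \<phi> x (\<lambda>_. 1) \<omega> \<le> Lop A \<phi> x (indicator (Eadm \<theta> A x - cyl_le \<theta> A x l)) \<omega>"
        using \<omega> by (intro Lop_one_le_tail) (auto simp: cyl_def not_le)
      also have "\<dots> \<le> ennreal (1 / (2 * Me))" using elim(2) \<omega> by (auto simp: cyl_def)
      also have "\<dots> < ennreal (1 / Me)" by (rule half_less)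
      also have "\<dots> \<le> Lop A \<phi> x (\<lambda>_. 1) \<omega>" using elim(1) \<omega> by blast
      finally show False by simp
    qed
  qed
  then show "\<exists>b'. AE x in M. \<exists>a\<le>b'. A x a b" by blast
qed

lemma finite_range_imp_condB:
  assumes \<phi>: "summable_potential M \<theta> A \<alpha> \<phi>" and range: "finite_range M A"
  shows "condB M \<theta> A \<phi>"
  unfolding condB_def
proof (intro allI impI)
  fix \<epsilon> :: real assume "0 < \<epsilon>"
  then obtain l where tail: "AE x in M. \<forall>\<omega>\<in>Eadm \<theta> A (\<theta> x).
      Lop A \<phi> x (indicator (Eadm \<theta> A x - cyl_le \<theta> A x l)) \<omega> \<le> ennreal \<epsilon>"
    using summable_potential_tail[OF \<phi>] by blast
  obtain D where D: "\<And>e. finite (D e)" and D_AE: "\<And>e. AE x in M. {j. A x e j} \<subseteq> D e"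
    using range unfolding finite_range_def by metis
  have D_AE_all: "AE x in M. \<forall>e. {j. A x e j} \<subseteq> D e"
    using D_AE by (simp add: AE_all_countable)
  have "finite (\<Union>e\<le>l. D e)" using D by simp
  then obtain N where N: "(\<Union>e\<le>l. D e) \<subseteq> {..<N}" using finite_nat_bounded by blast
  have "AE x in M. \<forall>\<omega>\<in>cyl \<theta> A (\<theta> x) b. Lop A \<phi> x (\<lambda>_. 1) \<omega> \<le> ennreal \<epsilon>" if "N \<le> b" for b
    using tail D_AE_all
  proof eventually_elim
    case (elim x)
    show ?case
    proof
      fix \<omega> assume \<omega>: "\<omega> \<in> cyl \<theta> A (\<theta> x) b"
      have "l < e" if "A x e (\<omega> 0)" for e
      proof (rule ccontr)
        assume "\<not> l < e"
        then have "b \<in> (\<Union>e\<le>l. D e)" using elim(2) that \<omega> by (force simp: cyl_def not_less)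
        then show False using N \<open>N \<le> b\<close> by auto
      qed
      then have "Lop A \<phi> x (\<lambda>_. 1) \<omega> \<le> Lop A \<phi> x (indicator (Eadm \<theta> A x - cyl_le \<theta> A x l)) \<omega>"
        using \<omega> by (intro Lop_one_le_tail) (auto simp: cyl_def)
      also have "\<dots> \<le> ennreal \<epsilon>" using elim(1) \<omega> by (auto simp: cyl_def)
      finally show "Lop A \<phi> x (\<lambda>_. 1) \<omega> \<le> ennreal \<epsilon>" .
    qed
  qed
  then show "\<exists>N. \<forall>b\<ge>N. AE x in M. \<forall>\<omega>\<in>cyl \<theta> A (\<theta> x) b. Lop A \<phi> x (\<lambda>_. 1) \<omega> \<le> ennreal \<epsilon>"
    by blast
qed

lemma condB_imp_finite_range:
  assumes \<phi>: "summable_potential M \<theta> A \<alpha> \<phi>" and condB: "condB M \<theta> A \<phi>"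
    and nonempty: "\<And>x b. x \<in> space M \<Longrightarrow> cyl \<theta> A (\<theta> x) b \<noteq> {}"
  shows "finite_range M A"
  unfolding finite_range_def
proof
  fix e
  obtain c where c_pos: "\<And>e. 0 < c e"
    and c: "AE x in M. \<forall>e. \<forall>\<omega>\<in>cyl \<theta> A x e. c e \<le> exp (\<phi> x \<omega>)"
    using summable_potential_lower_bound[OF \<phi>] by blast
  have "0 < c e / 2" using c_pos[of e] by simp
  then obtain N where N: "\<And>b. N \<le> b \<Longrightarrow>
      AE x in M. \<forall>\<omega>\<in>cyl \<theta> A (\<theta> x) b. Lop A \<phi> x (\<lambda>_. 1) \<omega> \<le> ennreal (c e / 2)"
    using condB unfolding condB_def by blast
  have small: "AE x in M. \<forall>b\<ge>N. \<forall>\<omega>\<in>cyl \<theta> A (\<theta> x) b. Lop A \<phi> x (\<lambda>_. 1) \<omega> \<le> ennreal (c e / 2)"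
    unfolding AE_all_countable
  proof
    fix b show "AE x in M. N \<le> b \<longrightarrow>
        (\<forall>\<omega>\<in>cyl \<theta> A (\<theta> x) b. Lop A \<phi> x (\<lambda>_. 1) \<omega> \<le> ennreal (c e / 2))"
      by (cases "N \<le> b") (use N in auto)
  qed
  have half_less: "ennreal (c e / 2) < ennreal (c e)"
    using c_pos[of e] by (subst ennreal_less_iff) auto
  have "AE x in M. {j. A x e j} \<subseteq> {..<N}"
    using small c AE_space
  proof eventually_elim
    case (elim x)
    show ?case
    proof (rule subsetI, rule ccontr)
      fix j assume j: "j \<in> {j. A x e j}" and "j \<notin> {..<N}"
      obtain \<omega> where \<omega>: "\<omega> \<in> cyl \<theta> A (\<theta> x) j" using nonempty[OF elim(3)] by blast
      have "ennreal (c e) \<le> Lop A \<phi> x (\<lambda>_. 1) \<omega>"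
        using Lop_one_ge_lower_bound[of \<theta> A x c \<phi>, OF elim(2)] \<omega> j by (auto simp: cyl_def)
      also have "\<dots> \<le> ennreal (c e / 2)" using elim(1) \<open>j \<notin> {..<N}\<close> \<omega> by (simp add: not_less)
      finally show False using half_less by simp
    qed
  qed
  then show "\<exists>D. finite D \<and> (AE x in M. {j. A x e j} \<subseteq> D)" by blast
qed

theorem mainTheorem7:
  fixes M :: "'a measure" and \<theta> :: "'a \<Rightarrow> 'a" and A :: "'a \<Rightarrow> nat \<Rightarrow> nat \<Rightarrow> bool"
    and \<alpha> :: real and \<phi> :: "'a \<Rightarrow> (nat \<Rightarrow> nat) \<Rightarrow> real"
  assumes "random_shift M \<theta> A"
    and "top_mixing M \<theta> A"
    and "0 < \<alpha>"
    and "summable_potential M \<theta> A \<alpha> \<phi>"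
  shows "(bounded_access M A \<longleftrightarrow> condA M \<theta> A \<phi>) \<and> (finite_range M A \<longleftrightarrow> condB M \<theta> A \<phi>)"
proof -
  have \<theta>: "\<theta> \<in> M \<rightarrow>\<^sub>M M" using assms(1) by (simp add: random_shift_def)
  have nonempty: "cyl \<theta> A (\<theta> x) b \<noteq> {}" if "x \<in> space M" for x b
    using cyl_nonempty[OF \<theta> assms(2)] measurable_space[OF \<theta> that] .
  show ?thesis
    using bounded_access_imp_condA[OF assms(4)] condA_imp_bounded_access[OF assms(4) _ nonempty]
      finite_range_imp_condB[OF assms(4)] condB_imp_finite_range[OF assms(4) _ nonempty]
    by blast
qed

end
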